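(* Assume $\omega$ satisfies $(\mathbf{TC})_{C,g}$ or $(\mathbf{TCG})_{C,g}$. For each $N\in\mathbb{N}$ and $T>0$, \[ \mathbb{E}\big[\|(W^{\beta,\omega}_N)^{-1}\|_T^2\big]<\infty\qquad\text{and}\qquad\mathbb{E}\Big[\Big\|\frac{\partial}{\partial\beta}\log W^{\beta,\omega}_N\Big\|_T^2\Big]<\infty, \] where the norms are taken in the variable $\beta$.
   Context: Fix $d\ge3$; $(S_n)$ is a random walk on $\mathbb{Z}^d$ with i.i.d. bounded increments, law $P^S_0$, expectation $E^S_0$. Independently, $\omega=(\omega_{n,z})_{(n,z)\in\mathbb{N}\times\mathbb{Z}^d}$ is a Markovian random field with law $\mathbb{P}$ (expectation $\mathbb{E}$), $\mathbb{E}[e^{\beta\omega_{n,z}}]<\infty$ for all real $\beta$ (Markovian: conditional law of $(\omega_v)_{v\in V}$ given $\mathscr{F}_{V^c}$ equals that given $\mathscr{F}_{\partial V}$, $\mathscr{F}_\Lambda=\sigma(\omega_v:v\in\Lambda)$). $d_1(A,B)=\inf\{|x-y|_1+|m-k|:(m,x)\in A,(k,y)\in B\}$. $(\mathbf{TC})_{C,g}$: for finite $\Delta\subseteq V$ with $d_1(\Delta,V^c)>1$ and $A\subseteq V^c$, the Radon–Nikodym derivative of the conditional law of $(\omega_v)_{v\in\Delta}$ given $\omega|_{V^c}=\eta$ w.r.t. that given $\omega|_{V^c}=\eta'$ is at most $\exp(C\sum_{(m,x)\in\partial\Delta,(k,y)\in\partial A}e^{-g|x-y|_1-g|m-k|})$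 whenever $\eta,\eta'\in[0,\infty)^{\mathbb{N}\times\mathbb{Z}^d}$ agree on $V^c\setminus A$; $(\mathbf{TCG})_{C,g}$: same with sum over $(m,x)\in\Delta,(k,y)\in A$. $Z^{\beta,\omega}_N=E^S_0[\exp(\beta\sum_{k=1}^N\omega_{k,S_k})]$ and $W^{\beta,\omega}_N=Z^{\beta,\omega}_N/\mathbb{E}[Z^{\beta,\omega}_N]$. For a Borel function $f$ of $\beta$ and $T>0$, $\|f\|_T=\operatorname{ess\,sup}\{|f(\beta)|:0\le\beta\le T\}$. *)

theory Defs
  imports "HOL-Probability.Probability"
begin

text \<open>Space-time sites (n,z) in N x Z^d; the dimension d is CARD('d).\<close>
type_synonym 'd site = "nat \<times> (int ^ 'd)"
type_synonym 'd config = "'d site \<Rightarrow> real"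

definition l1norm :: "int ^ 'd \<Rightarrow> int" where
  "l1norm x = (\<Sum>i\<in>UNIV. \<bar>x $ i\<bar>)"

definition site_dist :: "('d::finite) site \<Rightarrow> 'd site \<Rightarrow> nat" where
  "site_dist u v = nat (l1norm (snd u - snd v)) + nat \<bar>int (fst u) - int (fst v)\<bar>"

text \<open>d_1(A,B) as an infimum (= infinity if A or B is empty).\<close>
definition d1 :: "('d::finite) site set \<Rightarrow> 'd site set \<Rightarrow> enat" where
  "d1 A B = (INF p \<in> A \<times> B. enat (site_dist (fst p) (snd p)))"

definition bdry :: "('d::finite) site set \<Rightarrow> 'd site set" where
  "bdry V = {v. v \<notin> V \<and> (\<exists>u\<in>V. site_dist u v = 1)}"

definition Omega :: "'d config measure" where
  "Omega = PiM UNIV (\<lambda>_. borel)"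

definition FF :: "'d site set \<Rightarrow> 'd config measure" where
  "FF L = vimage_algebra (space Omega) (\<lambda>\<omega>. restrict \<omega> L) (PiM L (\<lambda>_. borel))"

definition markov_field :: "('d::finite) config measure \<Rightarrow> bool" where
  "markov_field P \<longleftrightarrow>
     (\<forall>V. \<forall>B \<in> sets (PiM V (\<lambda>_. borel :: real measure)).
        AE \<omega> in P. real_cond_exp P (FF (- V)) (indicator ((\<lambda>\<omega>. restrict \<omega> V) -` B)) \<omega>
                 = real_cond_exp P (FF (bdry V)) (indicator ((\<lambda>\<omega>. restrict \<omega> V) -` B)) \<omega>)"

text \<open>K V eta is (a version of) the conditional law of omega given omega restricted to V^c = eta.\<close>
definition cond_law_family ::
  "'d config measure \<Rightarrow> ('d site set \<Rightarrow> 'd config \<Rightarrow> 'd config measure) \<Rightarrow> bool" where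
  "cond_law_family P K \<longleftrightarrow>
     (\<forall>V \<eta>. prob_space (K V \<eta>) \<and> sets (K V \<eta>) = sets Omega) \<and>
     (\<forall>V. \<forall>B \<in> sets Omega. (\<lambda>\<eta>. emeasure (K V \<eta>) B) \<in> borel_measurable (FF (- V))) \<and>
     (\<forall>V. \<forall>B \<in> sets Omega. \<forall>E \<in> sets (FF (- V)).
        emeasure P (B \<inter> E) = (\<integral>\<^sup>+ \<eta>. indicator E \<eta> * emeasure (K V \<eta>) B \<partial>P))"

definition cond_law_on ::
  "('d site set \<Rightarrow> 'd config \<Rightarrow> 'd config measure) \<Rightarrow> 'd site set \<Rightarrow> 'd site set \<Rightarrow> 'd config
    \<Rightarrow> ('d site \<Rightarrow> real) measure" where
  "cond_law_on K V \<Delta> \<eta> = distr (K V \<eta>) (PiM \<Delta> (\<lambda>_. borel)) (\<lambda>\<omega>. restrict \<omega> \<Delta>)"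

definition decay_sum :: "real \<Rightarrow> ('d::finite) site set \<Rightarrow> 'd site set \<Rightarrow> real" where
  "decay_sum g X Y = (\<Sum>\<^sub>\<infinity>(u, v) \<in> X \<times> Y.
      exp (- g * real_of_int (l1norm (snd u - snd v)) - g * \<bar>real (fst u) - real (fst v)\<bar>))"

definition TC_gen ::
  "(('d::finite) site set \<Rightarrow> 'd site set \<Rightarrow> real) \<Rightarrow>
   ('d site set \<Rightarrow> 'd config \<Rightarrow> 'd config measure) \<Rightarrow> bool" where
  "TC_gen bound K \<longleftrightarrow>
     (\<forall>V \<Delta> A \<eta> \<eta>'. finite \<Delta> \<and> \<Delta> \<subseteq> V \<and> d1 \<Delta> (- V) > 1 \<and> A \<subseteq> - V \<and>
        (\<forall>v. 0 \<le> \<eta> v) \<and> (\<forall>v. 0 \<le> \<eta>' v) \<and> (\<forall>v \<in> - V - A. \<eta> v = \<eta>' v) \<longrightarrow>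
        absolutely_continuous (cond_law_on K V \<Delta> \<eta>') (cond_law_on K V \<Delta> \<eta>) \<and>
        (AE z in cond_law_on K V \<Delta> \<eta>'.
            RN_deriv (cond_law_on K V \<Delta> \<eta>') (cond_law_on K V \<Delta> \<eta>) z
              \<le> ennreal (exp (bound \<Delta> A))))"

definition TC :: "real \<Rightarrow> real \<Rightarrow> (('d::finite) site set \<Rightarrow> 'd config \<Rightarrow> 'd config measure) \<Rightarrow> bool" where
  "TC C g K = TC_gen (\<lambda>\<Delta> A. C * decay_sum g (bdry \<Delta>) (bdry A)) K"

definition TCG :: "real \<Rightarrow> real \<Rightarrow> (('d::finite) site set \<Rightarrow> 'd config \<Rightarrow> 'd config measure) \<Rightarrow> bool" where
  "TCG C g K = TC_gen (\<lambda>\<Delta> A. C * decay_sum g \<Delta> A) K"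

definition Zpart :: "(int ^ ('d::finite)) pmf \<Rightarrow> nat \<Rightarrow> real \<Rightarrow> 'd config \<Rightarrow> real" where
  "Zpart \<mu> N \<beta> \<omega> = measure_pmf.expectation (Pi_pmf {1..N} 0 (\<lambda>_. \<mu>))
      (\<lambda>X. exp (\<beta> * (\<Sum>k = 1..N. \<omega> (k, \<Sum>j = 1..k. X j))))"

definition Wpart :: "(int ^ ('d::finite)) pmf \<Rightarrow> 'd config measure \<Rightarrow> nat \<Rightarrow> real \<Rightarrow> 'd config \<Rightarrow> real" where
  "Wpart \<mu> P N \<beta> \<omega> = Zpart \<mu> N \<beta> \<omega> / (\<integral>\<omega>'. Zpart \<mu> N \<beta> \<omega>' \<partial>P)"

definition tnorm :: "real \<Rightarrow> (real \<Rightarrow> real) \<Rightarrow> ereal" where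
  "tnorm T f = esssup (restrict_space lborel {0..T}) (\<lambda>\<beta>. ereal \<bar>f \<beta>\<bar>)"

end

theory Submission
  imports Defs
begin

text \<open>For fixed N the walk has finitely many possible paths x, so Z_N^\<beta> is a finite mixture of
  the weights exp(\<beta> H_x(\<omega>)), each energy H_x being a finite sum of values of \<omega>. With
  A(\<omega>) = \<Sum>_x |H_x(\<omega>)|, which has all exponential moments, one has
  exp(-|\<beta>| A) \<le> Z_N^\<beta> \<le> exp(|\<beta>| A) and |\<partial>_\<beta> Z_N^\<beta>| \<le> A Z_N^\<beta>. Differentiating under
  the expectation, E[Z_N^\<beta>] and its derivative are bounded and E[Z_N^\<beta>] is bounded away from 0
  for \<beta> in [0,T]. Hence (W_N^\<beta>)^{-1} and \<partial>_\<beta> log W_N^\<beta> are bounded on [0,T] by a constant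
  times exp((T+1) A(\<omega>)), which is square integrable.\<close>

lemma abs_mult_exp_abs_le: "\<bar>y\<bar> * exp (c * \<bar>y\<bar>) \<le> exp ((c + 1) * \<bar>y\<bar>)" for c y :: real
proof -
  have "\<bar>y\<bar> \<le> exp \<bar>y\<bar>" using exp_ge_add_one_self[of "\<bar>y\<bar>"] by linarith
  then have "\<bar>y\<bar> * exp (c * \<bar>y\<bar>) \<le> exp \<bar>y\<bar> * exp (c * \<bar>y\<bar>)" by (simp add: mult_right_mono)
  also have "\<dots> = exp ((c + 1) * \<bar>y\<bar>)" by (simp add: exp_add[symmetric] algebra_simps)
  finally show ?thesis .
qed

lemma abs_exp_diff_le: "\<bar>exp a - exp b\<bar> \<le> \<bar>a - b\<bar> * exp (max a b)" for a b :: real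
proof -
  have main: "exp x - exp y \<le> (x - y) * exp x" if "y \<le> x" for x y :: real
  proof -
    have "exp x * (1 + (y - x)) \<le> exp x * exp (y - x)"
      using exp_ge_add_one_self[of "y - x"] by simp
    also have "\<dots> = exp y" by (simp add: exp_add[symmetric])
    finally show ?thesis by (simp add: algebra_simps)
  qed
  show ?thesis
    using main[of b a] main[of a b] by (cases "b \<le> a") (auto simp: max_def abs_if)
qed

lemma abs_exp_difference_quotient_le:
  fixes b t y :: real
  assumes "t \<noteq> 0"
  shows "\<bar>(exp ((b + t) * y) - exp (b * y)) / t\<bar> \<le> \<bar>y\<bar> * exp ((\<bar>b\<bar> + \<bar>t\<bar>) * \<bar>y\<bar>)"
proof -
  have "max ((b + t) * y) (b * y) \<le> (\<bar>b\<bar> + \<bar>t\<bar>) * \<bar>y\<bar>"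
  proof -
    have "(b + t) * y \<le> \<bar>b + t\<bar> * \<bar>y\<bar>" "b * y \<le> \<bar>b\<bar> * \<bar>y\<bar>"
      by (metis abs_ge_self abs_mult)+
    moreover have "\<bar>b + t\<bar> * \<bar>y\<bar> \<le> (\<bar>b\<bar> + \<bar>t\<bar>) * \<bar>y\<bar>" "\<bar>b\<bar> * \<bar>y\<bar> \<le> (\<bar>b\<bar> + \<bar>t\<bar>) * \<bar>y\<bar>"
      by (simp_all add: mult_right_mono abs_triangle_ineq)
    ultimately show ?thesis by linarith
  qed
  have "\<bar>exp ((b + t) * y) - exp (b * y)\<bar>
      \<le> \<bar>(b + t) * y - b * y\<bar> * exp (max ((b + t) * y) (b * y))"
    by (rule abs_exp_diff_le)
  also have "\<dots> = \<bar>t\<bar> * \<bar>y\<bar> * exp (max ((b + t) * y) (b * y))"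
    by (simp add: algebra_simps abs_mult)
  also have "\<dots> \<le> \<bar>t\<bar> * \<bar>y\<bar> * exp ((\<bar>b\<bar> + \<bar>t\<bar>) * \<bar>y\<bar>)"
    using \<open>max _ _ \<le> _\<close> by (intro mult_left_mono) auto
  finally show ?thesis
    using assms by (simp add: abs_divide divide_le_eq mult_ac)
qed

lemma mult_exp_mono:
  fixes a b y :: real
  assumes "a \<le> b"
  shows "y * exp (a * y) \<le> y * exp (b * y)"
proof (cases "0 \<le> y")
  case True
  with assms show ?thesis by (intro mult_left_mono) (auto intro: mult_right_mono)
next
  case False
  with assms have "b * y \<le> a * y" by (intro mult_right_mono_neg) auto
  with False show ?thesis by (intro mult_left_mono_neg) auto
qed

definition has_exp_moments :: "'a measure \<Rightarrow> ('a \<Rightarrow> real) \<Rightarrow> bool" where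
  "has_exp_moments M f \<longleftrightarrow> f \<in> borel_measurable M \<and> (\<forall>c. integrable M (\<lambda>x. exp (c * f x)))"

lemma
  assumes "has_exp_moments M f"
  shows has_exp_moments_measurable: "f \<in> borel_measurable M"
    and integrable_exp_moment: "integrable M (\<lambda>x. exp (c * f x))"
  using assms by (auto simp: has_exp_moments_def)

lemma has_exp_moments_abs:
  assumes f: "has_exp_moments M f"
  shows "has_exp_moments M (\<lambda>x. \<bar>f x\<bar>)"
  unfolding has_exp_moments_def
proof (intro conjI allI)
  have [measurable]: "f \<in> borel_measurable M" using f by (rule has_exp_moments_measurable)
  show "(\<lambda>x. \<bar>f x\<bar>) \<in> borel_measurable M" by measurable
  fix c
  have bound: "exp (c * \<bar>y\<bar>) \<le> exp (c * y) + exp (- (c * y))" for y :: real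
    by (cases "0 \<le> y") (simp_all add: add_increasing add_increasing2)
  have "integrable M (\<lambda>x. exp (c * f x) + exp (- c * f x))"
    using f by (intro Bochner_Integration.integrable_add integrable_exp_moment)
  then show "integrable M (\<lambda>x. exp (c * \<bar>f x\<bar>))"
    by (rule Bochner_Integration.integrable_bound) (measurable, intro AE_I2, simp add: bound)
qed

lemma has_exp_moments_add:
  assumes f: "has_exp_moments M f" and g: "has_exp_moments M g"
  shows "has_exp_moments M (\<lambda>x. f x + g x)"
  unfolding has_exp_moments_def
proof (intro conjI allI)
  have [measurable]: "f \<in> borel_measurable M" "g \<in> borel_measurable M"
    using f g by (auto dest: has_exp_moments_measurable)
  show "(\<lambda>x. f x + g x) \<in> borel_measurable M" by measurable
  fix c
  have "integrable M (\<lambda>x. exp (2 * c * f x) + exp (2 * c * g x))"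
    using f g by (intro Bochner_Integration.integrable_add integrable_exp_moment)
  then show "integrable M (\<lambda>x. exp (c * (f x + g x)))"
  proof (rule Bochner_Integration.integrable_bound)
    show "AE x in M. norm (exp (c * (f x + g x))) \<le> norm (exp (2 * c * f x) + exp (2 * c * g x))"
    proof (intro AE_I2)
      fix x
      have "2 * exp (c * f x) * exp (c * g x) \<le> (exp (c * f x))\<^sup>2 + (exp (c * g x))\<^sup>2"
        by (rule sum_squares_bound)
      moreover have "0 \<le> exp (c * f x) * exp (c * g x)" by simp
      ultimately have "exp (c * f x) * exp (c * g x) \<le> (exp (c * f x))\<^sup>2 + (exp (c * g x))\<^sup>2"
        by linarith
      then show "norm (exp (c * (f x + g x))) \<le> norm (exp (2 * c * f x) + exp (2 * c * g x))"
        by (simp add: distrib_left exp_add exp_double[symmetric] mult_ac)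
    qed
  qed measurable
qed

lemma (in finite_measure) has_exp_moments_sum:
  assumes "finite I" and "\<And>i. i \<in> I \<Longrightarrow> has_exp_moments M (f i)"
  shows "has_exp_moments M (\<lambda>x. \<Sum>i\<in>I. f i x)"
  using assms
proof (induction I rule: finite_induct)
  case empty
  then show ?case by (simp add: has_exp_moments_def)
next
  case (insert i I)
  then show ?case by (simp add: has_exp_moments_add)
qed

lemma integrable_mult_exp_moment:
  assumes f: "has_exp_moments M f"
  shows "integrable M (\<lambda>x. f x * exp (c * f x))"
proof (rule Bochner_Integration.integrable_bound)
  have [measurable]: "f \<in> borel_measurable M" using f by (rule has_exp_moments_measurable)
  show "integrable M (\<lambda>x. exp ((\<bar>c\<bar> + 1) * \<bar>f x\<bar>))"
    using has_exp_moments_abs[OF f] by (rule integrable_exp_moment)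
  show "(\<lambda>x. f x * exp (c * f x)) \<in> borel_measurable M" by measurable
  have "\<bar>f x * exp (c * f x)\<bar> \<le> exp ((\<bar>c\<bar> + 1) * \<bar>f x\<bar>)" for x
  proof -
    have "c * f x \<le> \<bar>c\<bar> * \<bar>f x\<bar>" by (metis abs_ge_self abs_mult)
    then have "\<bar>f x * exp (c * f x)\<bar> \<le> \<bar>f x\<bar> * exp (\<bar>c\<bar> * \<bar>f x\<bar>)"
      by (simp add: abs_mult mult_left_mono)
    also have "\<dots> \<le> exp ((\<bar>c\<bar> + 1) * \<bar>f x\<bar>)" by (rule abs_mult_exp_abs_le)
    finally show ?thesis .
  qed
  then show "AE x in M. norm (f x * exp (c * f x)) \<le> norm (exp ((\<bar>c\<bar> + 1) * \<bar>f x\<bar>))"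
    by simp
qed

lemma has_field_derivative_integral_exp_moment:
  assumes f: "has_exp_moments M f"
  shows "((\<lambda>b. \<integral>x. exp (b * f x) \<partial>M) has_field_derivative (\<integral>x. f x * exp (b0 * f x) \<partial>M)) (at b0)"
  unfolding DERIV_def tendsto_at_iff_sequentially
proof (intro allI impI)
  have [measurable]: "f \<in> borel_measurable M" using f by (rule has_exp_moments_measurable)
  fix t :: "nat \<Rightarrow> real"
  assume t_ne: "\<forall>i. t i \<in> UNIV - {0}" and t_lim: "t \<longlonglongrightarrow> 0"
  have "Bseq t" using t_lim by (rule convergent_imp_Bseq[OF convergentI])
  then obtain B where B: "\<And>i. \<bar>t i\<bar> \<le> B" by (auto simp: Bseq_def)
  let ?q = "\<lambda>i x. (exp ((b0 + t i) * f x) - exp (b0 * f x)) / t i"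
  have quotient_eq: "((\<lambda>s. ((\<integral>x. exp ((b0 + s) * f x) \<partial>M) - (\<integral>x. exp (b0 * f x) \<partial>M)) / s) \<circ> t) i
      = (\<integral>x. ?q i x \<partial>M)" for i
    using f by (simp add: integral_diff[symmetric] integrable_exp_moment)
  show "((\<lambda>s. ((\<integral>x. exp ((b0 + s) * f x) \<partial>M) - (\<integral>x. exp (b0 * f x) \<partial>M)) / s) \<circ> t)
      \<longlonglongrightarrow> (\<integral>x. f x * exp (b0 * f x) \<partial>M)"
    unfolding quotient_eq
  proof (rule integral_dominated_convergence[where w="\<lambda>x. exp ((\<bar>b0\<bar> + B + 1) * \<bar>f x\<bar>)"])
    show "integrable M (\<lambda>x. exp ((\<bar>b0\<bar> + B + 1) * \<bar>f x\<bar>))"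
      using has_exp_moments_abs[OF f] by (rule integrable_exp_moment)
    show "AE x in M. (\<lambda>i. ?q i x) \<longlonglongrightarrow> f x * exp (b0 * f x)"
    proof (intro AE_I2)
      fix x
      have "((\<lambda>b. exp (b * f x)) has_field_derivative (f x * exp (b0 * f x))) (at b0)"
        by (auto intro!: derivative_eq_intros)
      with t_ne t_lim show "(\<lambda>i. ?q i x) \<longlonglongrightarrow> f x * exp (b0 * f x)"
        by (auto simp: DERIV_def tendsto_at_iff_sequentially o_def)
    qed
    show "AE x in M. norm (?q i x) \<le> exp ((\<bar>b0\<bar> + B + 1) * \<bar>f x\<bar>)" for i
    proof (intro AE_I2)
      fix x
      have "\<bar>?q i x\<bar> \<le> \<bar>f x\<bar> * exp ((\<bar>b0\<bar> + \<bar>t i\<bar>) * \<bar>f x\<bar>)"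
        using t_ne by (intro abs_exp_difference_quotient_le) auto
      also have "\<dots> \<le> \<bar>f x\<bar> * exp ((\<bar>b0\<bar> + B) * \<bar>f x\<bar>)"
        using B[of i] by (auto intro!: mult_left_mono mult_right_mono)
      also have "\<dots> \<le> exp ((\<bar>b0\<bar> + B + 1) * \<bar>f x\<bar>)" by (rule abs_mult_exp_abs_le)
      finally show "norm (?q i x) \<le> exp ((\<bar>b0\<bar> + B + 1) * \<bar>f x\<bar>)" by simp
    qed
  qed measurable
qed

lemma (in prob_space) integral_exp_pos:
  fixes f :: "'a \<Rightarrow> real"
  assumes "integrable M (\<lambda>x. exp (f x))"
  shows "0 < (\<integral>x. exp (f x) \<partial>M)"
proof -
  have "(\<integral>x. exp (f x) \<partial>M) \<noteq> 0"
    using integral_nonneg_eq_0_iff_AE[of M "\<lambda>x. exp (f x)"] assms AE_False by auto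
  then show ?thesis by (simp add: integral_nonneg_AE order_le_neq_trans)
qed

lemma tnorm_le:
  assumes "f \<in> borel_measurable borel" and "\<And>b. b \<in> {0..T} \<Longrightarrow> \<bar>f b\<bar> \<le> c"
  shows "tnorm T f \<le> ereal c"
  unfolding tnorm_def
proof (rule esssup_I)
  have "f \<in> borel_measurable (restrict_space lborel {0..T})"
    using assms(1) by (intro measurable_restrict_space1) (simp add: measurable_cong_sets[OF sets_lborel refl])
  then show "(\<lambda>b. ereal \<bar>f b\<bar>) \<in> borel_measurable (restrict_space lborel {0..T})" by measurable
  show "AE b in restrict_space lborel {0..T}. ereal \<bar>f b\<bar> \<le> ereal c"
    using assms(2) by (intro AE_I2) (simp add: space_restrict_space)
qed

lemma nn_integral_tnorm_square_finite:
  assumes "0 \<le> T"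
    and "\<And>w. f w \<in> borel_measurable borel"
    and "\<And>w b. b \<in> {0..T} \<Longrightarrow> \<bar>f w b\<bar> \<le> G w"
    and "integrable M (\<lambda>w. (G w)\<^sup>2)"
  shows "(\<integral>\<^sup>+w. (e2ennreal (tnorm T (f w)))\<^sup>2 \<partial>M) < \<infinity>"
proof -
  have "(e2ennreal (tnorm T (f w)))\<^sup>2 \<le> ennreal ((G w)\<^sup>2)" for w
  proof -
    have G_nonneg: "0 \<le> G w" using assms(1) assms(3)[of 0 w] by simp
    have "e2ennreal (tnorm T (f w)) \<le> ennreal (G w)"
      using e2ennreal_mono[OF tnorm_le[of "f w" T "G w", OF assms(2,3)]] by (simp add: e2ennreal_ereal)
    then have "(e2ennreal (tnorm T (f w)))\<^sup>2 \<le> (ennreal (G w))\<^sup>2" by (rule power_mono) simp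
    then show ?thesis using G_nonneg by (simp add: ennreal_power)
  qed
  then have "(\<integral>\<^sup>+w. (e2ennreal (tnorm T (f w)))\<^sup>2 \<partial>M) \<le> (\<integral>\<^sup>+w. ennreal ((G w)\<^sup>2) \<partial>M)"
    by (rule nn_integral_mono)
  also have "\<dots> = ennreal (\<integral>w. (G w)\<^sup>2 \<partial>M)"
    using assms(4) by (rule nn_integral_eq_integral) simp
  also have "\<dots> < \<infinity>" by simp
  finally show ?thesis .
qed

text \<open>Z b w is Z_N^{b,w}: Q is the law of the path, h x w the energy of path x in the
  environment w, EZ b = E[Z_N^b], and Z b w / EZ b is W_N^{b,w}.\<close>

locale exp_tilted_mixture = prob_space P for P :: "'w measure" +
  fixes Q :: "'x pmf" and h :: "'x \<Rightarrow> 'w \<Rightarrow> real"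
  assumes finite_support: "finite (set_pmf Q)"
    and has_exp_moments_h: "\<And>x. x \<in> set_pmf Q \<Longrightarrow> has_exp_moments P (h x)"
begin

definition Z :: "real \<Rightarrow> 'w \<Rightarrow> real" where
  "Z b w = (\<Sum>x\<in>set_pmf Q. pmf Q x * exp (b * h x w))"

definition Z' :: "real \<Rightarrow> 'w \<Rightarrow> real" where
  "Z' b w = (\<Sum>x\<in>set_pmf Q. pmf Q x * (h x w * exp (b * h x w)))"

definition EZ :: "real \<Rightarrow> real" where
  "EZ b = (\<integral>w. Z b w \<partial>P)"

definition EZ' :: "real \<Rightarrow> real" where
  "EZ' b = (\<integral>w. Z' b w \<partial>P)"

definition A :: "'w \<Rightarrow> real" where
  "A w = (\<Sum>x\<in>set_pmf Q. \<bar>h x w\<bar>)"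

lemma Z_eq_expectation: "Z b w = measure_pmf.expectation Q (\<lambda>x. exp (b * h x w))"
  unfolding Z_def by (subst integral_measure_pmf_real[OF finite_support]) (auto simp: mult.commute)

lemma sum_pmf_support: "(\<Sum>x\<in>set_pmf Q. pmf Q x) = 1"
  by (rule sum_pmf_eq_1[OF finite_support]) simp

lemma has_exp_moments_A: "has_exp_moments P A"
  unfolding A_def[abs_def]
  by (intro has_exp_moments_sum has_exp_moments_abs has_exp_moments_h finite_support)

lemma A_nonneg: "0 \<le> A w"
  unfolding A_def by (simp add: sum_nonneg)

lemma abs_h_le_A: "x \<in> set_pmf Q \<Longrightarrow> \<bar>h x w\<bar> \<le> A w"
  unfolding A_def by (intro member_le_sum finite_support) auto

lemma abs_mult_h_le:
  assumes "x \<in> set_pmf Q" and "\<bar>b\<bar> \<le> T"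
  shows "\<bar>b * h x w\<bar> \<le> T * A w"
  unfolding abs_mult using assms abs_h_le_A by (intro mult_mono) auto

lemma exp_le_Z:
  assumes "\<bar>b\<bar> \<le> T"
  shows "exp (- T * A w) \<le> Z b w"
proof -
  have "exp (- T * A w) = (\<Sum>x\<in>set_pmf Q. pmf Q x * exp (- T * A w))"
    by (simp add: sum_distrib_right[symmetric] sum_pmf_support)
  also have "\<dots> \<le> Z b w"
    unfolding Z_def using abs_mult_h_le[OF _ assms, of _ w]
    by (intro sum_mono mult_left_mono) (auto simp: abs_le_iff minus_le_iff)
  finally show ?thesis .
qed

lemma Z_le_exp:
  assumes "\<bar>b\<bar> \<le> T"
  shows "Z b w \<le> exp (T * A w)"
proof -
  have "Z b w \<le> (\<Sum>x\<in>set_pmf Q. pmf Q x * exp (T * A w))"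
    unfolding Z_def using abs_mult_h_le[OF _ assms, of _ w]
    by (intro sum_mono mult_left_mono) (auto simp: abs_le_iff)
  also have "\<dots> = exp (T * A w)"
    by (simp add: sum_distrib_right[symmetric] sum_pmf_support)
  finally show ?thesis .
qed

lemma Z_pos: "0 < Z b w"
  by (rule order.strict_trans2[OF exp_gt_zero exp_le_Z[OF order.refl]])

lemma abs_Z'_le: "\<bar>Z' b w\<bar> \<le> A w * Z b w"
proof -
  have "\<bar>Z' b w\<bar> \<le> (\<Sum>x\<in>set_pmf Q. pmf Q x * (\<bar>h x w\<bar> * exp (b * h x w)))"
    unfolding Z'_def by (rule order_trans[OF sum_abs]) (simp add: abs_mult)
  also have "\<dots> \<le> (\<Sum>x\<in>set_pmf Q. pmf Q x * (A w * exp (b * h x w)))"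
    using abs_h_le_A by (intro sum_mono mult_left_mono mult_right_mono) auto
  also have "\<dots> = A w * Z b w"
    unfolding Z_def by (simp add: sum_distrib_left mult_ac)
  finally show ?thesis .
qed

lemma Z_has_derivative: "((\<lambda>b. Z b w) has_field_derivative Z' b w) (at b)"
  unfolding Z_def Z'_def by (auto intro!: derivative_eq_intros DERIV_sum simp: mult_ac)

lemma integrable_Z: "integrable P (Z b)"
  unfolding Z_def
  by (intro Bochner_Integration.integrable_sum integrable_mult_right integrable_exp_moment has_exp_moments_h)

lemma integrable_Z': "integrable P (Z' b)"
  unfolding Z'_def
  by (intro Bochner_Integration.integrable_sum integrable_mult_right integrable_mult_exp_moment has_exp_moments_h)

lemma EZ_has_derivative: "(EZ has_field_derivative EZ' b) (at b)"
proof -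
  have EZ_eq: "EZ b = (\<Sum>x\<in>set_pmf Q. pmf Q x * (\<integral>w. exp (b * h x w) \<partial>P))" for b
    unfolding EZ_def Z_def
    by (subst Bochner_Integration.integral_sum)
      (auto intro!: integrable_mult_right integrable_exp_moment has_exp_moments_h)
  have EZ'_eq: "EZ' b = (\<Sum>x\<in>set_pmf Q. pmf Q x * (\<integral>w. h x w * exp (b * h x w) \<partial>P))"
    unfolding EZ'_def Z'_def
    by (subst Bochner_Integration.integral_sum)
      (auto intro!: integrable_mult_right integrable_mult_exp_moment has_exp_moments_h)
  show ?thesis
    unfolding EZ_eq[abs_def] EZ'_eq
    by (intro DERIV_sum DERIV_cmult has_field_derivative_integral_exp_moment has_exp_moments_h)
qed

lemma integral_exp_neg_le_EZ:
  assumes "\<bar>b\<bar> \<le> T"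
  shows "(\<integral>w. exp (- T * A w) \<partial>P) \<le> EZ b"
  unfolding EZ_def
proof (rule integral_mono_AE)
  show "AE w in P. exp (- T * A w) \<le> Z b w"
    using exp_le_Z[OF assms] by simp
  show "integrable P (\<lambda>w. exp (- T * A w))"
    using has_exp_moments_A by (rule integrable_exp_moment)
qed (rule integrable_Z)

lemma EZ_pos: "0 < EZ b"
  using integral_exp_pos[OF integrable_exp_moment[OF has_exp_moments_A]]
    integral_exp_neg_le_EZ[OF order.refl]
  by (rule order.strict_trans2)

lemma EZ_le_integral_exp:
  assumes "\<bar>b\<bar> \<le> T"
  shows "EZ b \<le> (\<integral>w. exp (T * A w) \<partial>P)"
  unfolding EZ_def
proof (rule integral_mono[OF integrable_Z])
  show "integrable P (\<lambda>w. exp (T * A w))"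
    using has_exp_moments_A by (rule integrable_exp_moment)
  show "Z b w \<le> exp (T * A w)" for w
    using assms by (rule Z_le_exp)
qed

lemma abs_EZ'_le:
  assumes "\<bar>b\<bar> \<le> T"
  shows "\<bar>EZ' b\<bar> \<le> (\<integral>w. A w * exp (T * A w) \<partial>P)"
proof -
  have "\<bar>EZ' b\<bar> \<le> (\<integral>w. \<bar>Z' b w\<bar> \<partial>P)"
    unfolding EZ'_def by (rule integral_abs_bound)
  also have "\<dots> \<le> (\<integral>w. A w * exp (T * A w) \<partial>P)"
  proof (rule integral_mono)
    show "integrable P (\<lambda>w. \<bar>Z' b w\<bar>)"
      using integrable_Z' by (rule integrable_abs)
    show "integrable P (\<lambda>w. A w * exp (T * A w))"
      using has_exp_moments_A by (rule integrable_mult_exp_moment)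
    fix w
    have "Z b w \<le> exp (T * A w)"
      using assms by (rule Z_le_exp)
    then show "\<bar>Z' b w\<bar> \<le> A w * exp (T * A w)"
      using abs_Z'_le[of b w] A_nonneg[of w] by (auto intro: order_trans mult_left_mono)
  qed
  finally show ?thesis .
qed

lemma mono_EZ': "mono EZ'"
proof
  fix a b :: real
  assume "a \<le> b"
  then have "Z' a w \<le> Z' b w" for w
    unfolding Z'_def by (intro sum_mono mult_left_mono mult_exp_mono) auto
  then show "EZ' a \<le> EZ' b"
    unfolding EZ'_def by (intro integral_mono integrable_Z')
qed

lemma deriv_ln_W: "deriv (\<lambda>b. ln (Z b w / EZ b)) b = Z' b w / Z b w - EZ' b / EZ b"
proof (rule DERIV_imp_deriv)
  have "ln (Z b w / EZ b) = ln (Z b w) - ln (EZ b)" for b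
    by (rule ln_divide_pos[OF Z_pos EZ_pos])
  moreover have "((\<lambda>b. ln (Z b w) - ln (EZ b)) has_field_derivative Z' b w / Z b w - EZ' b / EZ b) (at b)"
    by (rule derivative_eq_intros Z_has_derivative EZ_has_derivative
        | simp add: Z_pos EZ_pos field_simps)+
  ultimately show "((\<lambda>b. ln (Z b w / EZ b)) has_field_derivative Z' b w / Z b w - EZ' b / EZ b) (at b)"
    by simp
qed

lemma
  shows borel_measurable_inverse_W: "(\<lambda>b. 1 / (Z b w / EZ b)) \<in> borel_measurable borel"
    and borel_measurable_deriv_ln_W: "(\<lambda>b. deriv (\<lambda>b. ln (Z b w / EZ b)) b) \<in> borel_measurable borel"
proof -
  have [measurable]: "(\<lambda>b. Z b w) \<in> borel_measurable borel" "(\<lambda>b. Z' b w) \<in> borel_measurable borel"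
    unfolding Z_def Z'_def by (intro borel_measurable_continuous_onI continuous_intros)+
  have [measurable]: "EZ \<in> borel_measurable borel"
    by (intro borel_measurable_continuous_onI continuous_at_imp_continuous_on ballI
        DERIV_isCont[OF EZ_has_derivative])
  have [measurable]: "EZ' \<in> borel_measurable borel"
    using mono_EZ' by (rule borel_measurable_mono)
  show "(\<lambda>b. 1 / (Z b w / EZ b)) \<in> borel_measurable borel" by measurable
  show "(\<lambda>b. deriv (\<lambda>b. ln (Z b w / EZ b)) b) \<in> borel_measurable borel"
    unfolding deriv_ln_W by measurable
qed

lemma abs_inverse_W_le:
  assumes "\<bar>b\<bar> \<le> T"
  shows "\<bar>1 / (Z b w / EZ b)\<bar> \<le> (\<integral>w. exp (T * A w) \<partial>P) * exp (T * A w)"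
proof -
  have "1 / Z b w \<le> exp (T * A w)"
  proof -
    have "exp (- T * A w) \<le> Z b w"
      using assms by (rule exp_le_Z)
    then show ?thesis using Z_pos[of b w] by (simp add: exp_minus field_simps)
  qed
  then have "EZ b * (1 / Z b w) \<le> (\<integral>w. exp (T * A w) \<partial>P) * exp (T * A w)"
    using EZ_le_integral_exp[OF assms] EZ_pos[of b] Z_pos[of b w] by (intro mult_mono) auto
  then show ?thesis using EZ_pos[of b] Z_pos[of b w] by simp
qed

lemma abs_deriv_ln_W_le:
  assumes "\<bar>b\<bar> \<le> T"
  shows "\<bar>deriv (\<lambda>b. ln (Z b w / EZ b)) b\<bar>
    \<le> A w + (\<integral>w. A w * exp (T * A w) \<partial>P) / (\<integral>w. exp (- T * A w) \<partial>P)"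
proof -
  have "\<bar>Z' b w / Z b w\<bar> \<le> A w"
    using abs_Z'_le[of b w] Z_pos[of b w] by (simp add: abs_divide divide_le_eq)
  moreover have "\<bar>EZ' b / EZ b\<bar>
      \<le> (\<integral>w. A w * exp (T * A w) \<partial>P) / (\<integral>w. exp (- T * A w) \<partial>P)"
  proof -
    have "0 \<le> (\<integral>w. A w * exp (T * A w) \<partial>P)"
      using A_nonneg by (simp add: integral_nonneg_AE)
    moreover have "0 < (\<integral>w. exp (- T * A w) \<partial>P)"
      using has_exp_moments_A by (intro integral_exp_pos integrable_exp_moment)
    ultimately show ?thesis
      unfolding abs_divide using EZ_pos[of b] integral_exp_neg_le_EZ[OF assms]
      by (intro frac_le abs_EZ'_le[OF assms]) auto
  qed
  ultimately show ?thesis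
    unfolding deriv_ln_W by (rule order_trans[OF abs_triangle_ineq4 add_mono])
qed

lemma integrable_square_mult_exp_A: "integrable P (\<lambda>w. (c * exp (k * A w))\<^sup>2)"
proof -
  have "(c * exp (k * A w))\<^sup>2 = c\<^sup>2 * exp ((2 * k) * A w)" for w
    by (simp add: power_mult_distrib exp_double[symmetric] mult.assoc)
  then show ?thesis
    using integrable_exp_moment[OF has_exp_moments_A] by (simp add: integrable_mult_right)
qed

lemma nn_integral_tnorm_square_inverse_W_finite:
  assumes "0 \<le> T"
  shows "(\<integral>\<^sup>+w. (e2ennreal (tnorm T (\<lambda>b. 1 / (Z b w / EZ b))))\<^sup>2 \<partial>P) < \<infinity>"
proof (rule nn_integral_tnorm_square_finite[OF assms borel_measurable_inverse_W])
  show "\<bar>1 / (Z b w / EZ b)\<bar> \<le> (\<integral>w. exp (T * A w) \<partial>P) * exp (T * A w)" if "b \<in> {0..T}" for w b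
    using that by (intro abs_inverse_W_le) auto
qed (rule integrable_square_mult_exp_A)

lemma nn_integral_tnorm_square_deriv_ln_W_finite:
  assumes "0 \<le> T"
  shows "(\<integral>\<^sup>+w. (e2ennreal (tnorm T (\<lambda>b. deriv (\<lambda>b. ln (Z b w / EZ b)) b)))\<^sup>2 \<partial>P) < \<infinity>"
proof -
  define c where "c = (\<integral>w. A w * exp (T * A w) \<partial>P) / (\<integral>w. exp (- T * A w) \<partial>P)"
  have "0 \<le> c"
    unfolding c_def using A_nonneg by (simp add: integral_nonneg_AE)
  have bound: "A w + c \<le> (1 + c) * exp (1 * A w)" for w
  proof -
    have "c * 1 \<le> c * exp (A w)"
      using \<open>0 \<le> c\<close> A_nonneg[of w] by (intro mult_left_mono) auto
    then show ?thesis
      using exp_ge_add_one_self[of "A w"] unfolding distrib_right mult_1_left mult_1_right by linarith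
  qed
  show ?thesis
  proof (rule nn_integral_tnorm_square_finite[OF assms borel_measurable_deriv_ln_W])
    show "\<bar>deriv (\<lambda>b. ln (Z b w / EZ b)) b\<bar> \<le> (1 + c) * exp (1 * A w)" if "b \<in> {0..T}" for w b
    proof -
      have "\<bar>b\<bar> \<le> T" using that by auto
      then have "\<bar>deriv (\<lambda>b. ln (Z b w / EZ b)) b\<bar> \<le> A w + c"
        unfolding c_def by (rule abs_deriv_ln_W_le)
      then show ?thesis using bound by (rule order_trans)
    qed
  qed (rule integrable_square_mult_exp_A)
qed

end

lemma finite_set_Pi_pmf:
  assumes "finite I" and "\<And>i. i \<in> I \<Longrightarrow> finite (set_pmf (p i))"
  shows "finite (set_pmf (Pi_pmf I d p))"
proof (rule finite_subset)
  show "set_pmf (Pi_pmf I d p) \<subseteq> PiE_dflt I d (set_pmf \<circ> p)"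
    using assms(1) by (rule set_Pi_pmf_subset')
  show "finite (PiE_dflt I d (set_pmf \<circ> p))"
    using assms by (intro finite_PiE_dflt) auto
qed

lemma has_exp_moments_sum_sites:
  fixes P :: "'d config measure"
  assumes "prob_space P" and "sets P = sets Omega"
    and "\<forall>v \<beta>. integrable P (\<lambda>\<omega>. exp (\<beta> * \<omega> v))" and "finite K"
  shows "has_exp_moments P (\<lambda>\<omega>. \<Sum>k\<in>K. \<omega> (s k))"
proof -
  interpret prob_space P by (rule assms(1))
  have "(\<lambda>\<omega>. \<omega> v) \<in> borel_measurable P" for v
    unfolding measurable_cong_sets[OF assms(2) refl] Omega_def
    by (rule measurable_component_singleton) simp
  then have "has_exp_moments P (\<lambda>\<omega>. \<omega> v)" for v
    unfolding has_exp_moments_def using assms(3) by blast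
  then show ?thesis
    using assms(4) by (intro has_exp_moments_sum)
qed

theorem lemmaB2:
  fixes \<mu> :: "(int ^ ('d::finite)) pmf" and P :: "'d config measure"
    and C g T :: real and N :: nat
  assumes "CARD('d) \<ge> 3"
    and "finite (set_pmf \<mu>)"
    and "prob_space P" and "sets P = sets Omega"
    and "\<forall>v \<beta>. integrable P (\<lambda>\<omega>. exp (\<beta> * \<omega> v))"
    and "markov_field P"
    and "C > 0" and "g > 0"
    and "\<exists>K. cond_law_family P K \<and> (TC C g K \<or> TCG C g K)"
    and "T > 0"
  shows "(\<integral>\<^sup>+\<omega>. (e2ennreal (tnorm T (\<lambda>\<beta>. 1 / Wpart \<mu> P N \<beta> \<omega>))) ^ 2 \<partial>P) < \<infinity> \<and>
         (\<integral>\<^sup>+\<omega>. (e2ennreal (tnorm T (\<lambda>\<beta>. deriv (\<lambda>b. ln (Wpart \<mu> P N b \<omega>)) \<beta>))) ^ 2 \<partial>P) < \<infinity>"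
proof -
  define Q where "Q = Pi_pmf {1..N} (0 :: int ^ 'd) (\<lambda>_. \<mu>)"
  define H where "H X \<omega> = (\<Sum>k = 1..N. \<omega> (k, \<Sum>j = 1..k. X j))"
    for X :: "nat \<Rightarrow> int ^ 'd" and \<omega> :: "'d config"
  have "finite (set_pmf Q)"
    unfolding Q_def using assms(2) by (intro finite_set_Pi_pmf) auto
  moreover have "has_exp_moments P (H X)" for X
    unfolding H_def[abs_def] using assms(3-5) by (intro has_exp_moments_sum_sites) auto
  ultimately interpret exp_tilted_mixture P Q H
    using assms(3) by (simp add: exp_tilted_mixture_def exp_tilted_mixture_axioms_def)
  have "Zpart \<mu> N b w = Z b w" for b w
    unfolding Z_eq_expectation unfolding Zpart_def Q_def H_def ..
  then have "Wpart \<mu> P N = (\<lambda>b w. Z b w / EZ b)"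
    by (intro ext) (simp add: Wpart_def EZ_def)
  then show ?thesis
    using nn_integral_tnorm_square_inverse_W_finite nn_integral_tnorm_square_deriv_ln_W_finite assms(10)
    by simp
qed

end
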